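(* Let $v_1,\dots,v_d\in\mathbb{Z}^d$ be linearly independent. If $a\in\mathbb{Z}^d$, then the parallelepiped $P=a+\sum_{i=1}^d[0,v_i]$ contains a unimodular copy of $\Delta_d$. If $a\in\mathbb{R}^d$, then the parallelepiped $P=a+\sum_{i=1}^d[0,2v_i]$ contains a unimodular copy of $\Delta_d$.
   Context: $[v,w]$ denotes the segment $\mathrm{conv}(v,w)$ and sums are Minkowski sums. $\Delta_d=\mathrm{conv}(0,e_1,\dots,e_d)$. A unimodular copy of a set $Y$ is $\{Ay+b:y\in Y\}$ with $A\in\mathrm{GL}(d,\mathbb{Z})$ and $b\in\mathbb{Z}^d$. *)

theory Defs
  imports "HOL-Analysis.Analysis"
begin

definition int_vec :: "real^'n \<Rightarrow> bool" where
  "int_vec x \<longleftrightarrow> (\<forall>i. x $ i \<in> \<int>)"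

text \<open>GL(d,Z): integer matrices whose inverse is also an integer matrix (equivalently det = +-1).\<close>
definition int_mat :: "real^'n^'n \<Rightarrow> bool" where
  "int_mat A \<longleftrightarrow> (\<forall>i j. A $ i $ j \<in> \<int>)"

definition GL_int :: "real^'n^'n \<Rightarrow> bool" where
  "GL_int A \<longleftrightarrow> int_mat A \<and> (\<exists>B. int_mat B \<and> A ** B = mat 1 \<and> B ** A = mat 1)"

definition std_simplex :: "(real^'n) set" where
  "std_simplex = convex hull (insert 0 (range (\<lambda>i. axis i 1)))"

definition unimodular_copy :: "(real^'n) set \<Rightarrow> (real^'n) set \<Rightarrow> bool" where
  "unimodular_copy Y S \<longleftrightarrow> (\<exists>A b. GL_int A \<and> int_vec b \<and> S = (\<lambda>y. A *v y + b) ` Y)"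

definition parallelepiped :: "real^'n \<Rightarrow> ('n \<Rightarrow> real^'n) \<Rightarrow> (real^'n) set" where
  "parallelepiped a w = {a + (\<Sum>i\<in>UNIV. p i) | p. \<forall>i. p i \<in> closed_segment 0 (w i)}"

end

theory Submission
  imports Defs
begin

text \<open>
  Let \<open>V\<close> be the matrix with columns \<open>v\<^sub>i\<close>. The lattice \<open>L = V\<^sup>-\<^sup>1 \<int>\<^sup>d\<close> contains \<open>\<int>\<^sup>d\<close> and
  satisfies \<open>det V \<cdot> L \<subseteq> \<int>\<^sup>d\<close>. Ordering the coordinates and taking, for each coordinate, a
  vector of \<open>L\<close> supported on it and the earlier ones with least positive entry there, then
  reducing its other entries modulo \<open>\<int>\<close>, yields a triangular basis \<open>q\<^sub>1, \<dots>, q\<^sub>d\<close> of \<open>L\<close>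
  inside \<open>[0,1]\<^sup>d\<close>. Hence \<open>A = V Q\<close> is unimodular and maps the vertices of \<open>\<Delta>\<^sub>d\<close> to
  \<open>0, V q\<^sub>1, \<dots>, V q\<^sub>d \<in> V [0,1]\<^sup>d\<close>, so \<open>a + A \<Delta>\<^sub>d\<close> lies in the parallelepiped for integral
  \<open>a\<close>. For real \<open>a\<close>, some integral \<open>b \<in> a + V [0,1)\<^sup>d\<close> gives \<open>b + V [0,1]\<^sup>d \<subseteq> a + V [0,2]\<^sup>d\<close>.
\<close>

lemma int_vec_matrix_vector_mult:
  assumes "int_mat A" "int_vec x"
  shows "int_vec (A *v x)"
  using assms unfolding int_mat_def int_vec_def matrix_vector_mult_def
  by (auto intro!: Ints_sum Ints_mult)

lemma det_in_Ints: "int_mat A \<Longrightarrow> det A \<in> \<int>"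
  unfolding int_mat_def det_def by (intro Ints_sum Ints_mult Ints_prod) auto

lemma matrix_eq_on_axes:
  fixes A B :: "real^'n^'m"
  assumes "\<And>j. A *v axis j 1 = B *v axis j 1"
  shows "A = B"
  using assms by (simp add: vec_eq_iff matrix_vector_mult_basis column_def)

lemma ex_least_positive_of_scaled_Ints:
  fixes X :: "real set" and D :: nat
  assumes "0 < D" and scaled: "\<And>x. x \<in> X \<Longrightarrow> real D * x \<in> \<int>" and "x0 \<in> X" "0 < x0"
  shows "\<exists>t\<in>X. 0 < t \<and> (\<forall>x\<in>X. 0 < x \<longrightarrow> t \<le> x)"
proof -
  define P where "P n \<longleftrightarrow> (\<exists>x\<in>X. 0 < x \<and> real D * x = real n)" for n
  have P: "P (nat \<lfloor>real D * x\<rfloor>)" and eq: "real D * x = real (nat \<lfloor>real D * x\<rfloor>)"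
    if "x \<in> X" "0 < x" for x
  proof -
    obtain m where "real D * x = of_int m" using scaled[OF \<open>x \<in> X\<close>] by (auto elim: Ints_cases)
    moreover have "0 < real D * x" using \<open>0 < D\<close> \<open>0 < x\<close> by simp
    ultimately show "real D * x = real (nat \<lfloor>real D * x\<rfloor>)" by simp
    then show "P (nat \<lfloor>real D * x\<rfloor>)" unfolding P_def using that by blast
  qed
  obtain t where t: "t \<in> X" "0 < t" "real D * t = real (LEAST n. P n)"
    using LeastI[of P, OF P[OF assms(3,4)]] unfolding P_def by blast
  have "t \<le> x" if "x \<in> X" "0 < x" for x
  proof -
    have "real D * t \<le> real D * x"
      using Least_le[of P, OF P[OF that]] t(3) eq[OF that] by simp
    then show ?thesis using \<open>0 < D\<close> by simp
  qed
  then show ?thesis using t by blast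
qed

lemma eq_of_int_mult_least_positive:
  fixes X :: "real set"
  assumes closed: "\<And>x y m. x \<in> X \<Longrightarrow> y \<in> X \<Longrightarrow> x - of_int m * y \<in> X"
    and "t \<in> X" "0 < t" and least: "\<And>x. x \<in> X \<Longrightarrow> 0 < x \<Longrightarrow> t \<le> x" and "y \<in> X"
  shows "\<exists>m::int. y = of_int m * t"
proof -
  define m where "m = \<lfloor>y / t\<rfloor>"
  have "y - of_int m * t \<in> X" using closed assms by blast
  moreover have "0 \<le> y - of_int m * t" "y - of_int m * t < t"
    using floor_divide_lower[OF \<open>0 < t\<close>, of y] floor_divide_upper[OF \<open>0 < t\<close>, of y]
    by (simp_all add: m_def algebra_simps)
  ultimately have "y - of_int m * t = 0" using least by force
  then show ?thesis by auto
qed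

definition cols_matrix :: "('n \<Rightarrow> real^'m) \<Rightarrow> real^'n^'m" where
  "cols_matrix q = (\<chi> j k. q k $ j)"

lemma cols_matrix_mult_vec: "cols_matrix q *v c = (\<Sum>k\<in>UNIV. c $ k *\<^sub>R q k)"
  by (simp add: cols_matrix_def matrix_vector_mult_def vec_eq_iff mult.commute)

lemma cols_matrix_mult_axis: "cols_matrix q *v axis k 1 = q k"
  by (simp add: matrix_vector_mult_basis column_def cols_matrix_def vec_eq_iff)

lemma int_mat_cols_matrix: "(\<And>k. int_vec (q k)) \<Longrightarrow> int_mat (cols_matrix q)"
  by (simp add: int_mat_def int_vec_def cols_matrix_def)

lemma cols_matrix_scaleR: "cols_matrix (\<lambda>k. c *\<^sub>R q k) = c *\<^sub>R cols_matrix q"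
  by (simp add: cols_matrix_def vec_eq_iff)

lemma invertible_cols_matrix:
  fixes v :: "'n::finite \<Rightarrow> real^'n"
  assumes "inj v" "independent (range v)"
  shows "invertible (cols_matrix v)"
  unfolding invertible_left_inverse matrix_left_invertible_independent_columns
proof (intro allI impI)
  fix c :: "'n \<Rightarrow> real" and i
  assume "(\<Sum>k\<in>UNIV. c k *s column k (cols_matrix v)) = 0"
  then have "(\<Sum>x\<in>range v. (c \<circ> inv v) x *\<^sub>R x) = 0"
    using assms(1) by (simp add: sum.reindex column_def cols_matrix_def scalar_mult_eq_scaleR)
  then have "(c \<circ> inv v) (v i) = 0"
    using assms(2) unfolding independent_explicit by blast
  then show "c i = 0" using assms(1) by simp
qed

lemma box_image_subset_parallelepiped:
  "(\<lambda>c. a + cols_matrix w *v c) ` cbox 0 1 \<subseteq> parallelepiped a w"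
proof
  fix x assume "x \<in> (\<lambda>c. a + cols_matrix w *v c) ` cbox 0 1"
  then obtain c where c: "c \<in> cbox 0 1" "x = a + (\<Sum>i\<in>UNIV. c $ i *\<^sub>R w i)"
    by (auto simp: cols_matrix_mult_vec)
  have "c $ i *\<^sub>R w i \<in> closed_segment 0 (w i)" for i
    using c(1) by (auto simp: in_segment mem_box_cart)
  then show "x \<in> parallelepiped a w"
    unfolding parallelepiped_def c(2) by blast
qed

text \<open>The ranking \<open>r\<close> of the coordinates is the order in which the basis is triangular.\<close>

definition supported_below :: "('n \<Rightarrow> nat) \<Rightarrow> nat \<Rightarrow> real^'n \<Rightarrow> bool" where
  "supported_below r m x \<longleftrightarrow> (\<forall>i. m \<le> r i \<longrightarrow> x $ i = 0)"

lemma supported_below_diff_scaleR: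
  "supported_below r m x \<Longrightarrow> supported_below r m y \<Longrightarrow> supported_below r m (x - c *\<^sub>R y)"
  by (simp add: supported_below_def)

locale int_submodule =
  fixes L :: "(real^'n::finite) set"
  assumes diff_mem: "x \<in> L \<Longrightarrow> y \<in> L \<Longrightarrow> x - y \<in> L"
    and of_int_scaleR_mem: "x \<in> L \<Longrightarrow> of_int m *\<^sub>R x \<in> L"
begin

lemma diff_of_int_scaleR_mem: "x \<in> L \<Longrightarrow> y \<in> L \<Longrightarrow> x - of_int m *\<^sub>R y \<in> L"
  by (simp add: diff_mem of_int_scaleR_mem)

context
  fixes r :: "'n \<Rightarrow> nat" and q :: "'n \<Rightarrow> real^'n"
  assumes "inj r"
    and q_mem: "\<And>k. q k \<in> L"
    and q_supported: "\<And>k. supported_below r (Suc (r k)) (q k)"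
    and pivot: "\<And>k x. x \<in> L \<Longrightarrow> supported_below r (Suc (r k)) x \<Longrightarrow>
                  \<exists>n::int. x $ k = of_int n * q k $ k"
begin

lemma triangular_family_spans_supported_below:
  "x \<in> L \<Longrightarrow> supported_below r m x \<Longrightarrow> \<exists>z::'n \<Rightarrow> int. x = (\<Sum>k\<in>UNIV. of_int (z k) *\<^sub>R q k)"
proof (induction m arbitrary: x)
  case 0
  then have "x = 0" by (simp add: supported_below_def vec_eq_iff)
  then show ?case by (intro exI[of _ "\<lambda>_. 0"]) simp
next
  case (Suc m)
  show ?case
  proof (cases "m \<in> range r")
    case False
    then have "supported_below r m x"
      using Suc.prems(2) False unfolding supported_below_def
      by (metis Suc_leI le_neq_implies_less rangeI)
    then show ?thesis using Suc by blast
  next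
    case True
    then obtain k where k: "r k = m" by blast
    obtain n where n: "x $ k = of_int n * q k $ k" using pivot Suc.prems k by blast
    define x' where "x' = x - of_int n *\<^sub>R q k"
    have "x' \<in> L" using Suc.prems(1) q_mem by (simp add: x'_def diff_of_int_scaleR_mem)
    moreover have "supported_below r m x'"
      unfolding supported_below_def
    proof (intro allI impI)
      fix i assume "m \<le> r i"
      show "x' $ i = 0"
      proof (cases "i = k")
        case True then show ?thesis using n by (simp add: x'_def)
      next
        case False
        then have "Suc m \<le> r i" using \<open>m \<le> r i\<close> k \<open>inj r\<close> by (metis injD le_neq_implies_less Suc_leI)
        then show ?thesis
          using Suc.prems(2) q_supported[of k] k by (simp add: x'_def supported_below_def)
      qed
    qed
    ultimately obtain z where z: "x' = (\<Sum>j\<in>UNIV. of_int (z j) *\<^sub>R q j)" using Suc.IH by blast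
    have "(\<Sum>j\<in>UNIV. of_int ((z(k := z k + n)) j) *\<^sub>R q j)
        = (\<Sum>j\<in>UNIV. of_int (z j) *\<^sub>R q j + (if j = k then of_int n *\<^sub>R q k else 0))"
      by (rule sum.cong) (auto simp: algebra_simps)
    also have "\<dots> = x" by (simp add: sum.distrib flip: z) (simp add: x'_def)
    finally show ?thesis by metis
  qed
qed

lemma triangular_family_spans:
  assumes "x \<in> L"
  shows "\<exists>z::'n \<Rightarrow> int. x = (\<Sum>k\<in>UNIV. of_int (z k) *\<^sub>R q k)"
proof -
  have "r i < Suc (Max (range r))" for i by (simp add: le_imp_less_Suc)
  then have "supported_below r (Suc (Max (range r))) x"
    unfolding supported_below_def by (meson leD)
  then show ?thesis using triangular_family_spans_supported_below assms by blast
qed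

end

end

locale int_superlattice = int_submodule L for L :: "(real^'n::finite) set" +
  fixes D :: nat
  assumes int_vec_mem: "int_vec z \<Longrightarrow> z \<in> L"
    and D_pos: "0 < D"
    and scaled_coord_Ints: "x \<in> L \<Longrightarrow> real D * x $ i \<in> \<int>"
begin

lemma ex_reduced_pivot:
  fixes r :: "'n \<Rightarrow> nat"
  shows "\<exists>q. q \<in> L \<and> supported_below r (Suc (r k)) q \<and> q \<in> cbox 0 1 \<and>
             (\<forall>x\<in>L. supported_below r (Suc (r k)) x \<longrightarrow> (\<exists>n::int. x $ k = of_int n * q $ k))"
proof -
  define Lk where "Lk = {x \<in> L. supported_below r (Suc (r k)) x}"
  define X where "X = (\<lambda>x. x $ k) ` Lk"
  have Lk_closed: "x - of_int n *\<^sub>R y \<in> Lk" if "x \<in> Lk" "y \<in> Lk" for x y n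
    using that by (simp add: Lk_def diff_of_int_scaleR_mem supported_below_diff_scaleR)
  have X_closed: "x - of_int n * y \<in> X" if "x \<in> X" "y \<in> X" for x y n
    using that Lk_closed unfolding X_def by force
  have axis_mem: "axis k 1 \<in> Lk"
    by (auto simp: Lk_def supported_below_def axis_def int_vec_def intro!: int_vec_mem)
  obtain t where t: "t \<in> X" "0 < t" and least: "\<And>y. y \<in> X \<Longrightarrow> 0 < y \<Longrightarrow> t \<le> y"
    using ex_least_positive_of_scaled_Ints[OF D_pos, of X 1] axis_mem scaled_coord_Ints
    unfolding X_def Lk_def by force
  then obtain c where c: "c \<in> Lk" "c $ k = t" unfolding X_def by blast
  \<comment> \<open>Subtracting an integer vector with zero pivot entry keeps \<open>c\<close> in \<open>Lk\<close> and its pivot,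
      and moves the other entries into \<open>[0,1)\<close>.\<close>
  define w :: "real^'n" where "w = (\<chi> i. if i = k then 0 else of_int \<lfloor>c $ i\<rfloor>)"
  define q where "q = c - w"
  have "w \<in> Lk"
    using c(1) by (auto simp: Lk_def w_def supported_below_def int_vec_def intro!: int_vec_mem)
  then have "q \<in> Lk" using Lk_closed[OF c(1), of w 1] by (simp add: q_def)
  moreover have "q \<in> cbox 0 1"
  proof -
    have "t \<le> 1" using least[of 1] axis_mem unfolding X_def by force
    then show ?thesis
      using \<open>0 < t\<close> c(2) by (auto simp: mem_box_cart q_def w_def) linarith+
  qed
  moreover have "\<exists>n::int. x $ k = of_int n * q $ k" if "x \<in> Lk" for x
    using eq_of_int_mult_least_positive[OF X_closed t least] that c(2)
    by (simp add: X_def q_def w_def)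
  ultimately show ?thesis unfolding Lk_def by blast
qed

lemma ex_unit_cube_basis:
  "\<exists>q. (\<forall>k. q k \<in> L \<and> q k \<in> cbox 0 1) \<and>
       (\<forall>x\<in>L. \<exists>z::'n \<Rightarrow> int. x = (\<Sum>k\<in>UNIV. of_int (z k) *\<^sub>R q k))"
proof -
  obtain r :: "'n \<Rightarrow> nat" where "inj r"
    using finite_imp_inj_to_nat_seg[of "UNIV :: 'n set"] by auto
  obtain q where "\<And>k. q k \<in> L" "\<And>k. supported_below r (Suc (r k)) (q k)" "\<And>k. q k \<in> cbox 0 1"
    and "\<And>k x. x \<in> L \<Longrightarrow> supported_below r (Suc (r k)) x \<Longrightarrow> \<exists>n::int. x $ k = of_int n * q k $ k"
    using ex_reduced_pivot[of r] by metis
  with triangular_family_spans[OF \<open>inj r\<close>] show ?thesis by blast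
qed

end

lemma ex_int_superlattice_preimage:
  fixes V :: "real^'n::finite^'n"
  assumes "int_mat V" "invertible V"
  shows "\<exists>D. int_superlattice {c. int_vec (V *v c)} D"
proof -
  obtain d where d: "det V = of_int d"
    using det_in_Ints[OF assms(1)] by (auto elim: Ints_cases)
  have "d \<noteq> 0" using d assms(2) by (simp add: invertible_det_nz)
  have scaled: "real (nat \<bar>d\<bar>) * c $ k \<in> \<int>" if "int_vec (V *v c)" for c k
  proof -
    have "det (\<chi> i j. if j = k then (V *v c) $ i else V $ i $ j) \<in> \<int>"
      using that assms(1) by (intro det_in_Ints) (auto simp: int_mat_def int_vec_def)
    then have "c $ k * of_int d \<in> \<int>" by (simp add: cramer_lemma d)
    then show ?thesis by (cases "0 \<le> d") (auto simp: mult.commute minus_in_Ints_iff)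
  qed
  have "int_superlattice {c. int_vec (V *v c)} (nat \<bar>d\<bar>)"
  proof unfold_locales
    fix x y assume "x \<in> {c. int_vec (V *v c)}" "y \<in> {c. int_vec (V *v c)}"
    then show "x - y \<in> {c. int_vec (V *v c)}"
      by (simp add: int_vec_def matrix_vector_mult_diff_distrib)
  next
    fix x and m :: int assume "x \<in> {c. int_vec (V *v c)}"
    then show "of_int m *\<^sub>R x \<in> {c. int_vec (V *v c)}"
      by (simp add: int_vec_def matrix_vector_mult_scaleR)
  qed (use \<open>d \<noteq> 0\<close> scaled int_vec_matrix_vector_mult[OF assms(1)] in auto)
  then show ?thesis by blast
qed

lemma GL_int_mult_lattice_basis:
  fixes V :: "real^'n::finite^'n"
  assumes "int_mat V" "V ** W = mat 1"
    and q_int: "\<And>k. int_vec (V *v q k)"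
    and spans: "\<And>c. int_vec (V *v c) \<Longrightarrow> \<exists>z::'n \<Rightarrow> int. c = (\<Sum>k\<in>UNIV. of_int (z k) *\<^sub>R q k)"
  shows "GL_int (V ** cols_matrix q)"
proof -
  let ?A = "V ** cols_matrix q"
  have "?A *v axis k 1 = V *v q k" for k
    by (simp add: cols_matrix_mult_axis flip: matrix_vector_mul_assoc)
  moreover have "?A $ i $ k = (?A *v axis k 1) $ i" for i k
    by (simp add: matrix_vector_mult_basis column_def)
  ultimately have "?A $ i $ k = (V *v q k) $ i" for i k
    by simp
  then have "int_mat ?A" using q_int by (simp add: int_mat_def int_vec_def)
  have "int_vec (V *v (W *v axis j 1))" for j
    by (simp add: matrix_vector_mul_assoc assms(2)) (simp add: int_vec_def axis_def)
  then have "\<exists>z::'n \<Rightarrow> int. W *v axis j 1 = (\<Sum>k\<in>UNIV. of_int (z k) *\<^sub>R q k)" for j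
    by (rule spans)
  then obtain z where z: "\<And>j. W *v axis j 1 = (\<Sum>k\<in>UNIV. of_int (z j k) *\<^sub>R q k)"
    by metis
  define B :: "real^'n^'n" where "B = (\<chi> k j. of_int (z j k))"
  have "int_mat B" by (simp add: int_mat_def B_def)
  have "cols_matrix q ** B = W"
  proof (rule matrix_eq_on_axes)
    fix j
    have "B *v axis j 1 = (\<chi> k. of_int (z j k))"
      by (simp add: matrix_vector_mult_basis column_def B_def)
    then have "(cols_matrix q ** B) *v axis j 1 = (\<Sum>k\<in>UNIV. of_int (z j k) *\<^sub>R q k)"
      by (simp add: cols_matrix_mult_vec flip: matrix_vector_mul_assoc)
    then show "(cols_matrix q ** B) *v axis j 1 = W *v axis j 1" by (simp add: z)
  qed
  then have "?A ** B = mat 1" by (simp add: assms(2) flip: matrix_mul_assoc)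
  moreover then have "B ** ?A = mat 1" using matrix_left_right_inverse by blast
  ultimately show ?thesis using \<open>int_mat ?A\<close> \<open>int_mat B\<close> unfolding GL_int_def by blast
qed

lemma ex_GL_int_simplex_into_box_image:
  fixes V :: "real^'n::finite^'n"
  assumes "int_mat V" "invertible V"
  shows "\<exists>A. GL_int A \<and> (*v) A ` std_simplex \<subseteq> (*v) V ` cbox 0 1"
proof -
  obtain D where "int_superlattice {c. int_vec (V *v c)} D"
    using ex_int_superlattice_preimage[OF assms] by blast
  then obtain q where q: "\<And>k. int_vec (V *v q k)" "\<And>k. q k \<in> cbox 0 1"
    and spans: "\<And>c. int_vec (V *v c) \<Longrightarrow> \<exists>z::'n \<Rightarrow> int. c = (\<Sum>k\<in>UNIV. of_int (z k) *\<^sub>R q k)"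
    using int_superlattice.ex_unit_cube_basis by fastforce
  obtain W where "V ** W = mat 1" using assms(2) unfolding invertible_def by blast
  define A where "A = V ** cols_matrix q"
  have "GL_int A" unfolding A_def by (rule GL_int_mult_lattice_basis) fact+
  have "(*v) A ` std_simplex = convex hull ((*v) A ` insert 0 (range (\<lambda>i. axis i 1)))"
    unfolding std_simplex_def by (simp add: convex_hull_linear_image)
  also have "\<dots> \<subseteq> (*v) V ` cbox 0 1"
  proof (rule hull_minimal)
    have "0 \<in> (*v) V ` cbox 0 1" by (rule image_eqI[of _ _ 0]) (auto simp: mem_box_cart)
    moreover have "V *v q k \<in> (*v) V ` cbox 0 1" for k using q(2) by blast
    ultimately show "(*v) A ` insert 0 (range (\<lambda>i. axis i 1)) \<subseteq> (*v) V ` cbox 0 1"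
      by (auto simp: A_def cols_matrix_mult_axis simp flip: matrix_vector_mul_assoc)
    show "convex ((*v) V ` cbox 0 1)" by (intro convex_linear_image convex_box) simp
  qed
  finally show ?thesis using \<open>GL_int A\<close> by blast
qed

lemma ex_unimodular_simplex_in_box_image:
  fixes V :: "real^'n::finite^'n"
  assumes "int_mat V" "invertible V" "int_vec b"
  shows "\<exists>S. unimodular_copy std_simplex S \<and> S \<subseteq> (\<lambda>c. b + V *v c) ` cbox 0 1"
proof -
  obtain A where "GL_int A" and A: "(*v) A ` std_simplex \<subseteq> (*v) V ` cbox 0 1"
    using ex_GL_int_simplex_into_box_image[OF assms(1,2)] by blast
  have "unimodular_copy std_simplex ((\<lambda>y. A *v y + b) ` std_simplex)"
    unfolding unimodular_copy_def using \<open>GL_int A\<close> assms(3) by blast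
  moreover have "(\<lambda>y. A *v y + b) ` std_simplex \<subseteq> (\<lambda>c. b + V *v c) ` cbox 0 1"
    using A by (force simp: add.commute)
  ultimately show ?thesis by blast
qed

lemma ex_int_vec_box_image_subset_double:
  fixes V :: "real^'n::finite^'n" and a :: "real^'n"
  assumes "int_mat V" "invertible V"
  shows "\<exists>b. int_vec b \<and> (\<lambda>c. b + V *v c) ` cbox 0 1 \<subseteq> (\<lambda>c. a + (2 *\<^sub>R V) *v c) ` cbox 0 1"
proof -
  obtain W where "V ** W = mat 1" using assms(2) unfolding invertible_def by blast
  \<comment> \<open>\<open>b = a + V (c0 - f)\<close> with \<open>c0 - f \<in> [0,1)\<^sup>d\<close>.\<close>
  define c0 where "c0 = W *v (- a)"
  define f :: "real^'n" where "f = (\<chi> i. of_int \<lfloor>c0 $ i\<rfloor>)"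
  define b where "b = - (V *v f)"
  have "int_vec b"
    using int_vec_matrix_vector_mult[OF assms(1), of f] by (simp add: b_def f_def int_vec_def)
  moreover have "b + V *v c \<in> (\<lambda>c. a + (2 *\<^sub>R V) *v c) ` cbox 0 1" if "c \<in> cbox 0 1" for c
  proof
    have "V *v c0 = - a" by (simp add: c0_def matrix_vector_mul_assoc \<open>V ** W = mat 1\<close>)
    moreover have "(2 *\<^sub>R V) *v ((1/2) *\<^sub>R e) = V *v e" for e
      by (simp add: matrix_scaleR_vector_ac)
    ultimately show "b + V *v c = a + (2 *\<^sub>R V) *v ((1/2) *\<^sub>R (c0 - f + c))"
      by (simp add: b_def matrix_vector_right_distrib matrix_vector_mult_diff_distrib)
    show "(1/2) *\<^sub>R (c0 - f + c) \<in> cbox 0 1"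
      unfolding mem_box_cart
    proof
      fix i
      have "0 \<le> c $ i" "c $ i \<le> 1" using that by (simp_all add: mem_box_cart)
      moreover have "0 \<le> c0 $ i - of_int \<lfloor>c0 $ i\<rfloor>" "c0 $ i - of_int \<lfloor>c0 $ i\<rfloor> < 1"
        by linarith+
      ultimately show "0 $ i \<le> ((1/2) *\<^sub>R (c0 - f + c)) $ i \<and> ((1/2) *\<^sub>R (c0 - f + c)) $ i \<le> 1 $ i"
        by (simp add: f_def)
    qed
  qed
  ultimately show ?thesis by blast
qed

theorem lemma4p2:
  fixes v :: "'n::finite \<Rightarrow> real^'n"
  assumes vint: "\<And>i. int_vec (v i)"
    and indep: "inj v" "independent (range v)"
  shows "(\<forall>a. int_vec a \<longrightarrow>
            (\<exists>S. unimodular_copy std_simplex S \<and> S \<subseteq> parallelepiped a v))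
       \<and> (\<forall>a. \<exists>S. unimodular_copy std_simplex S \<and> S \<subseteq> parallelepiped a (\<lambda>i. 2 *\<^sub>R v i))"
proof (intro conjI allI impI)
  let ?V = "cols_matrix v"
  have V: "int_mat ?V" "invertible ?V"
    using int_mat_cols_matrix[OF vint] invertible_cols_matrix[OF indep] .
  fix a :: "real^'n"
  show "\<exists>S. unimodular_copy std_simplex S \<and> S \<subseteq> parallelepiped a v" if "int_vec a"
    using ex_unimodular_simplex_in_box_image[OF V that] box_image_subset_parallelepiped by blast
  obtain b where "int_vec b"
    and b: "(\<lambda>c. b + ?V *v c) ` cbox 0 1 \<subseteq> (\<lambda>c. a + (2 *\<^sub>R ?V) *v c) ` cbox 0 1"
    using ex_int_vec_box_image_subset_double[OF V] by blast
  obtain S where "unimodular_copy std_simplex S" "S \<subseteq> (\<lambda>c. b + ?V *v c) ` cbox 0 1"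
    using ex_unimodular_simplex_in_box_image[OF V \<open>int_vec b\<close>] by blast
  moreover have "(\<lambda>c. a + (2 *\<^sub>R ?V) *v c) ` cbox 0 1 \<subseteq> parallelepiped a (\<lambda>i. 2 *\<^sub>R v i)"
    using box_image_subset_parallelepiped[of a "\<lambda>i. 2 *\<^sub>R v i"] by (simp add: cols_matrix_scaleR)
  ultimately show "\<exists>S. unimodular_copy std_simplex S \<and> S \<subseteq> parallelepiped a (\<lambda>i. 2 *\<^sub>R v i)"
    using b by blast
qed

end
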